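(* Let $a>1$, $k\geq0$, $n\geq1$, $C_j(n,a)=\binom{n}{j}\left(\frac{1+a}{2}\right)^{n-j}\left(\frac{1-a}{2}\right)^j$, and $\mathtt{H}_{k,n}(x)=h_k(x)\sum_{j=0}^nC_j(n,a)e^{i(1-\frac{2j}{n})x}$. With $e_k(z)=z^k/\sqrt{k!}$ and $b_j=-\frac{i}{\sqrt2}(1-\frac{2j}{n})$, $$\mathcal{B}(\mathtt{H}_{k,n})(z)=\sum_{j=0}^nC_j(n,a)k_{b_j}(z)e_k(z-b_j)=\sum_{j=0}^nC_j(n,a)\mathcal{W}_{b_j}[e_k](z),\quad z\in\mathbb{C}.$$
   Context: $h_k$ are the normalized Hermite functions, $h_k(x)=(2^kk!\sqrt\pi)^{-1/2}H_k(x)e^{-x^2/2}$ with $H_k$ the Hermite polynomials. $\mathcal{B}(\varphi)(z)=\pi^{-1/4}\int_{\mathbb{R}}e^{-\frac12(z^2+x^2)+\sqrt2 zx}\varphi(x)\,dx$ is the Segal-Bargmann transform. $k_w(z)=e^{z\overline w-|w|^2/2}$ is the normalized Fock kernel, and for $b\in\mathbb{C}$ the Weyl operator on the Fock space is $\mathcal{W}_bf(z)=f(z-b)k_b(z)$. *)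

theory Defs
  imports "HOL-Analysis.Analysis"
begin

fun hermite_poly :: "nat \<Rightarrow> real \<Rightarrow> real" where
  "hermite_poly 0 x = 1"
| "hermite_poly (Suc 0) x = 2 * x"
| "hermite_poly (Suc (Suc k)) x = 2 * x * hermite_poly (Suc k) x - 2 * real (Suc k) * hermite_poly k x"

definition hermite_fun :: "nat \<Rightarrow> real \<Rightarrow> real" where
  "hermite_fun k x = (2 ^ k * fact k * sqrt pi) powr (-1/2) * hermite_poly k x * exp (- x\<^sup>2 / 2)"

definition bargmann :: "(real \<Rightarrow> complex) \<Rightarrow> complex \<Rightarrow> complex" where
  "bargmann \<phi> z = complex_of_real (pi powr (-1/4)) *
     (LINT x|lborel. exp (- (z\<^sup>2 + (complex_of_real x)\<^sup>2) / 2 + complex_of_real (sqrt 2) * z * complex_of_real x) * \<phi> x)"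

definition fock_kernel :: "complex \<Rightarrow> complex \<Rightarrow> complex" where
  "fock_kernel w z = exp (z * cnj w - complex_of_real ((cmod w)\<^sup>2) / 2)"

definition weyl :: "complex \<Rightarrow> (complex \<Rightarrow> complex) \<Rightarrow> complex \<Rightarrow> complex" where
  "weyl b f z = f (z - b) * fock_kernel b z"

definition ek :: "nat \<Rightarrow> complex \<Rightarrow> complex" where
  "ek k z = z ^ k / complex_of_real (sqrt (fact k))"

definition Ccoef :: "nat \<Rightarrow> nat \<Rightarrow> real \<Rightarrow> real" where
  "Ccoef j n a = real (n choose j) * ((1 + a) / 2) ^ (n - j) * ((1 - a) / 2) ^ j"

definition Hkn :: "nat \<Rightarrow> nat \<Rightarrow> real \<Rightarrow> real \<Rightarrow> complex" where
  "Hkn k n a x = complex_of_real (hermite_fun k x) *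
     (\<Sum>j=0..n. complex_of_real (Ccoef j n a) * exp (\<i> * complex_of_real ((1 - 2 * real j / real n) * x)))"

definition bcoef :: "nat \<Rightarrow> nat \<Rightarrow> complex" where
  "bcoef j n = - (\<i> / complex_of_real (sqrt 2)) * complex_of_real (1 - 2 * real j / real n)"

end

theory Submission
  imports Defs "HOL-Probability.Probability" "HOL-Real_Asymp.Real_Asymp"
begin

text \<open>
  Completing the square shows that the Bargmann transform turns the modulation
  \<open>\<phi>(x) \<mapsto> e^(i \<xi> x) \<phi>(x)\<close> into the Weyl operator \<open>W_b\<close> with \<open>b = -i \<xi> / sqrt 2\<close>;
  this is a pointwise identity between the integral kernels, so it needs no analysis.
  It also turns the integrand of the transform of \<open>h_k\<close> at \<open>w\<close> into a complex-shifted
  Gaussian \<open>e^(-(x - c)^2)\<close>, \<open>c = w / sqrt 2\<close>, times \<open>H_k\<close>. Integrating by parts with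
  \<open>H_k' = 2 x H_k - H_(k+1)\<close> gives \<open>\<integral> e^(-(x - c)^2) H_k(x) dx = sqrt pi (2 c)^k\<close>,
  hence the Bargmann transform maps \<open>h_k\<close> to \<open>e_k\<close>. The theorem follows by linearity,
  all integrands having Gaussian decay.
\<close>

definition shifted_gaussian :: "complex \<Rightarrow> real \<Rightarrow> complex" where
  "shifted_gaussian c x = exp (- (complex_of_real x - c)\<^sup>2)"

lemma continuous_on_shifted_gaussian: "continuous_on UNIV (shifted_gaussian c)"
  unfolding shifted_gaussian_def by (intro continuous_intros)

lemma shifted_gaussian_has_vector_derivative:
  "(shifted_gaussian c has_vector_derivative
      (- 2 * (complex_of_real x - c) * shifted_gaussian c x)) (at x)"
proof -
  have "((\<lambda>s. exp (- (s - c)\<^sup>2)) has_field_derivative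
      (- 2 * (complex_of_real x - c) * exp (- (complex_of_real x - c)\<^sup>2))) (at (complex_of_real x))"
    by (auto intro!: derivative_eq_intros)
  from has_vector_derivative_real_field[OF this] show ?thesis
    unfolding shifted_gaussian_def by simp
qed

lemma norm_shifted_gaussian_le:
  "norm (shifted_gaussian c x) \<le> exp ((Im c)\<^sup>2) * exp (2 * \<bar>Re c\<bar> * \<bar>x\<bar> - x\<^sup>2)"
proof -
  have "Re c * x \<le> \<bar>Re c\<bar> * \<bar>x\<bar>"
    by (metis abs_ge_self abs_mult)
  moreover have "(x - Re c)\<^sup>2 = x\<^sup>2 - 2 * (Re c * x) + (Re c)\<^sup>2"
    by (simp add: power2_diff algebra_simps)
  ultimately have "(Im c)\<^sup>2 - (x - Re c)\<^sup>2 \<le> (Im c)\<^sup>2 + (2 * \<bar>Re c\<bar> * \<bar>x\<bar> - x\<^sup>2)"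
    using zero_le_power2[of "Re c"] by linarith
  then show ?thesis
    unfolding shifted_gaussian_def norm_exp_eq_Re
    by (simp add: power2_eq_square algebra_simps flip: exp_add)
qed

lemma integral_gaussian_char:
  "(LINT x|lborel. complex_of_real (exp (- (x\<^sup>2) / 2)) * exp (\<i> * complex_of_real (t * x)))
     = complex_of_real (sqrt (2 * pi) * exp (- (t\<^sup>2) / 2))"
proof -
  have "complex_of_real (exp (- (t\<^sup>2) / 2)) = char std_normal_distribution t"
    by (simp add: char_std_normal_distribution)
  also have "\<dots> = (LINT x|lborel. std_normal_density x *\<^sub>R exp (\<i> * complex_of_real (t * x)))"
    unfolding char_def by (subst integral_density) auto
  also have "\<dots> = (1 / sqrt (2 * pi)) *\<^sub>R
      (LINT x|lborel. complex_of_real (exp (- (x\<^sup>2) / 2)) * exp (\<i> * complex_of_real (t * x)))"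
    by (simp add: std_normal_density_def scaleR_conv_of_real mult.assoc)
  finally show ?thesis
    by (simp add: scaleR_conv_of_real field_simps)
qed

lemma integral_shifted_gaussian:
  "(LINT x|lborel. shifted_gaussian c x) = complex_of_real (sqrt pi)"
proof -
  define u v where "u = Re c" and "v = Im c"
  have c: "c = complex_of_real u + \<i> * complex_of_real v"
    by (simp add: u_def v_def complex_eq_iff)
  have integrand: "exp (- (complex_of_real (u + y / sqrt 2) - c)\<^sup>2) =
      complex_of_real (exp (v\<^sup>2)) * (complex_of_real (exp (- (y\<^sup>2) / 2)) * exp (\<i> * complex_of_real (sqrt 2 * v * y)))"
    for y
  proof -
    have "- (complex_of_real (u + y / sqrt 2) - c)\<^sup>2
        = complex_of_real (v\<^sup>2) + (complex_of_real (- (y\<^sup>2) / 2) + \<i> * complex_of_real (sqrt 2 * v * y))"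
      unfolding c by (simp add: complex_eq_iff power2_eq_square field_simps)
    then show ?thesis by (simp only: exp_add exp_of_real)
  qed
  have "(LINT x|lborel. shifted_gaussian c x)
      = \<bar>1 / sqrt 2\<bar> *\<^sub>R (LINT y|lborel. exp (- (complex_of_real (u + 1 / sqrt 2 * y) - c)\<^sup>2))"
    unfolding shifted_gaussian_def by (rule lborel_integral_real_affine) simp
  also have "\<dots> = (1 / sqrt 2) *\<^sub>R (complex_of_real (exp (v\<^sup>2)) *
      (LINT y|lborel. complex_of_real (exp (- (y\<^sup>2) / 2)) * exp (\<i> * complex_of_real (sqrt 2 * v * y))))"
    using integrand by simp
  also have "\<dots> = complex_of_real (sqrt pi)"
  proof -
    have "sqrt (2 * pi) = sqrt 2 * sqrt pi" by (simp add: real_sqrt_mult)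
    then show ?thesis
      unfolding integral_gaussian_char[of "sqrt 2 * v"]
      by (simp add: scaleR_conv_of_real exp_minus field_simps flip: of_real_mult)
  qed
  finally show ?thesis .
qed

lemma integral_eq_zero_if_antiderivative_vanishes:
  fixes F f :: "real \<Rightarrow> 'a::euclidean_space"
  assumes "\<And>x. (F has_vector_derivative f x) (at x)" and "\<And>x. isCont f x"
    and "integrable lborel f" and "(F \<longlongrightarrow> 0) at_top" and "(F \<longlongrightarrow> 0) at_bot"
  shows "integral\<^sup>L lborel f = 0"
proof -
  have "(LBINT x=-\<infinity>..\<infinity>. f x) = 0 - 0"
    by (rule interval_integral_FTC_integrable[where F=F])
      (use assms in \<open>auto simp: set_integrable_def ereal_tendsto_simps\<close>)
  then show ?thesis
    by (simp add: interval_lebesgue_integral_def set_lebesgue_integral_def einterval_eq_UNIV)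
qed

lemma gaussian_dominated:
  fixes g :: "real \<Rightarrow> 'a::{banach, second_countable_topology}"
  assumes "continuous_on UNIV g" and bound: "\<And>x. norm (g x) \<le> M * exp (c * \<bar>x\<bar> - x\<^sup>2)"
  shows "integrable lborel g" and "(g \<longlongrightarrow> 0) at_top" and "(g \<longlongrightarrow> 0) at_bot"
proof -
  define K where "K = \<bar>M\<bar> * exp (c\<^sup>2 / 2) * sqrt (2 * pi)"
  have "norm (g x) \<le> K * std_normal_density x" for x
  proof -
    have "c * \<bar>x\<bar> - x\<^sup>2 \<le> c\<^sup>2 / 2 + - x\<^sup>2 / 2"
      using zero_le_power2[of "c - \<bar>x\<bar>"] by (simp add: power2_diff)
    then have "exp (c * \<bar>x\<bar> - x\<^sup>2) \<le> exp (c\<^sup>2 / 2) * exp (- x\<^sup>2 / 2)"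
      by (simp flip: exp_add)
    then have "M * exp (c * \<bar>x\<bar> - x\<^sup>2) \<le> \<bar>M\<bar> * (exp (c\<^sup>2 / 2) * exp (- x\<^sup>2 / 2))"
      by (intro mult_mono) auto
    then show ?thesis
      using bound[of x] by (simp add: K_def std_normal_density_def)
  qed
  note dominated = this
  show "integrable lborel g"
  proof (rule Bochner_Integration.integrable_bound[OF _ _ AE_I2])
    show "integrable lborel (\<lambda>x. K * std_normal_density x)" by simp
    show "g \<in> borel_measurable lborel"
      using assms(1) by (simp add: borel_measurable_continuous_onI)
  qed (use dominated in \<open>simp add: K_def abs_mult\<close>)
  have "((\<lambda>x. K * std_normal_density x) \<longlongrightarrow> 0) at_top"
    and "((\<lambda>x. K * std_normal_density x) \<longlongrightarrow> 0) at_bot"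
    unfolding std_normal_density_def by real_asymp+
  then show "(g \<longlongrightarrow> 0) at_top" and "(g \<longlongrightarrow> 0) at_bot"
    by (auto intro: Lim_null_comparison[OF always_eventually] dominated)
qed

lemma shifted_gaussian_times_exp_bounded:
  fixes q :: "real \<Rightarrow> real" and c :: complex
  assumes "continuous_on UNIV q" and "\<And>x. \<bar>q x\<bar> \<le> M * exp (d * \<bar>x\<bar>)"
  defines "g \<equiv> \<lambda>x. shifted_gaussian c x * complex_of_real (q x)"
  shows "integrable lborel g" and "(g \<longlongrightarrow> 0) at_top" and "(g \<longlongrightarrow> 0) at_bot"
proof -
  have "norm (g x) \<le> (exp ((Im c)\<^sup>2) * M) * exp ((2 * \<bar>Re c\<bar> + d) * \<bar>x\<bar> - x\<^sup>2)" for x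
  proof -
    have "norm (g x) \<le> exp ((Im c)\<^sup>2) * exp (2 * \<bar>Re c\<bar> * \<bar>x\<bar> - x\<^sup>2) * (M * exp (d * \<bar>x\<bar>))"
      unfolding g_def norm_mult norm_of_real by (intro mult_mono norm_shifted_gaussian_le assms) auto
    then show ?thesis
      by (simp add: algebra_simps flip: exp_add)
  qed
  moreover have "continuous_on UNIV g"
    unfolding g_def by (intro continuous_intros continuous_on_shifted_gaussian assms(1))
  ultimately show "integrable lborel g" and "(g \<longlongrightarrow> 0) at_top" and "(g \<longlongrightarrow> 0) at_bot"
    using gaussian_dominated by blast+
qed

text \<open>The usual \<open>H_k' = 2 k H_(k-1)\<close> combined with the recurrence; in this form the integration
  by parts below involves only \<open>H_k\<close> and \<open>H_(k+1)\<close>.\<close>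

lemma hermite_poly_has_real_derivative:
  "(hermite_poly k has_real_derivative (2 * x * hermite_poly k x - hermite_poly (Suc k) x)) (at x)"
proof (induction k x rule: hermite_poly.induct)
  case (3 k x)
  then show ?case
    by (auto intro!: derivative_eq_intros simp: algebra_simps)
qed (auto intro!: derivative_eq_intros simp: algebra_simps power2_eq_square)

lemma continuous_on_hermite_poly: "continuous_on UNIV (hermite_poly k)"
  by (meson DERIV_isCont continuous_at_imp_continuous_on hermite_poly_has_real_derivative)

lemma abs_le_exp_abs: "\<bar>x :: real\<bar> \<le> exp \<bar>x\<bar>"
  using exp_ge_add_one_self[of "\<bar>x\<bar>"] by linarith

lemma hermite_poly_bound: "\<exists>M\<ge>0. \<forall>x. \<bar>hermite_poly k x\<bar> \<le> M * exp (real k * \<bar>x\<bar>)"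
proof (induction k rule: induct_nat_012)
  case 0
  show ?case by (intro exI[of _ 1]) auto
next
  case 1
  have "\<bar>2 * x\<bar> \<le> 2 * exp \<bar>x\<bar>" for x :: real
    using abs_le_exp_abs[of x] by (simp add: abs_mult)
  then show ?case by (intro exI[of _ 2]) auto
next
  case (ge2 k)
  then obtain M0 M1 where M0: "M0 \<ge> 0" "\<And>x. \<bar>hermite_poly k x\<bar> \<le> M0 * exp (real k * \<bar>x\<bar>)"
    and M1: "M1 \<ge> 0" "\<And>x. \<bar>hermite_poly (Suc k) x\<bar> \<le> M1 * exp (real (Suc k) * \<bar>x\<bar>)"
    by blast
  show ?case
  proof (intro exI[of _ "2 * M1 + 2 * real (Suc k) * M0"] conjI allI)
    fix y :: real
    have "\<bar>2 * y * hermite_poly (Suc k) y\<bar> \<le> 2 * exp \<bar>y\<bar> * (M1 * exp (real (Suc k) * \<bar>y\<bar>))"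
      unfolding abs_mult by (intro mult_mono M1 abs_le_exp_abs) auto
    also have "\<dots> = 2 * M1 * exp (real (Suc (Suc k)) * \<bar>y\<bar>)"
      by (simp add: algebra_simps flip: exp_add)
    finally have 1: "\<bar>2 * y * hermite_poly (Suc k) y\<bar> \<le> 2 * M1 * exp (real (Suc (Suc k)) * \<bar>y\<bar>)" .
    have "\<bar>2 * real (Suc k) * hermite_poly k y\<bar> = 2 * real (Suc k) * \<bar>hermite_poly k y\<bar>"
      by (simp add: abs_mult)
    also have "\<dots> \<le> 2 * real (Suc k) * (M0 * exp (real k * \<bar>y\<bar>))"
      by (intro mult_left_mono M0) auto
    also have "\<dots> \<le> 2 * real (Suc k) * (M0 * exp (real (Suc (Suc k)) * \<bar>y\<bar>))"
      using M0 by (intro mult_left_mono) (auto intro: mult_right_mono)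
    finally have 0: "\<bar>2 * real (Suc k) * hermite_poly k y\<bar> \<le> 2 * real (Suc k) * M0 * exp (real (Suc (Suc k)) * \<bar>y\<bar>)"
      by simp
    show "\<bar>hermite_poly (Suc (Suc k)) y\<bar> \<le> (2 * M1 + 2 * real (Suc k) * M0) * exp (real (Suc (Suc k)) * \<bar>y\<bar>)"
    proof -
      have "\<bar>hermite_poly (Suc (Suc k)) y\<bar>
          \<le> \<bar>2 * y * hermite_poly (Suc k) y\<bar> + \<bar>2 * real (Suc k) * hermite_poly k y\<bar>"
        by (simp only: hermite_poly.simps abs_triangle_ineq4)
      then show ?thesis
        unfolding distrib_right using 0 1 by linarith
    qed
  qed (use M0 M1 in simp)
qed

lemma shifted_gaussian_hermite_poly_decay:
  fixes c :: complex and k :: nat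
  defines "g \<equiv> \<lambda>x. shifted_gaussian c x * complex_of_real (hermite_poly k x)"
  shows "integrable lborel g" and "(g \<longlongrightarrow> 0) at_top" and "(g \<longlongrightarrow> 0) at_bot"
proof -
  obtain M where "\<And>x. \<bar>hermite_poly k x\<bar> \<le> M * exp (real k * \<bar>x\<bar>)"
    using hermite_poly_bound by blast
  from shifted_gaussian_times_exp_bounded[OF continuous_on_hermite_poly this]
  show "integrable lborel g" and "(g \<longlongrightarrow> 0) at_top" and "(g \<longlongrightarrow> 0) at_bot"
    unfolding g_def by blast+
qed

lemma integral_shifted_gaussian_hermite_poly_Suc:
  "(LINT x|lborel. shifted_gaussian c x * complex_of_real (hermite_poly (Suc k) x))
     = 2 * c * (LINT x|lborel. shifted_gaussian c x * complex_of_real (hermite_poly k x))"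
proof -
  define F where "F x = shifted_gaussian c x * complex_of_real (hermite_poly k x)" for x
  define F' where "F' x = shifted_gaussian c x * complex_of_real (hermite_poly (Suc k) x)" for x
  define f where "f x = 2 * c * F x - F' x" for x
  have "(F has_vector_derivative f x) (at x)" for x
  proof -
    have "(F has_vector_derivative
        (shifted_gaussian c x * complex_of_real (2 * x * hermite_poly k x - hermite_poly (Suc k) x)
         + (- 2 * (complex_of_real x - c) * shifted_gaussian c x) * complex_of_real (hermite_poly k x))) (at x)"
      unfolding F_def
      by (intro has_vector_derivative_mult shifted_gaussian_has_vector_derivative
          has_vector_derivative_of_real hermite_poly_has_real_derivative)
    then show ?thesis
      by (simp add: f_def F_def F'_def algebra_simps)
  qed
  moreover have "isCont f x" for x
    unfolding f_def F_def F'_def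
    by (intro continuous_intros continuous_on_interior[OF continuous_on_shifted_gaussian]
        continuous_on_interior[OF continuous_on_hermite_poly]) auto
  moreover have "integrable lborel F" and "integrable lborel F'"
    unfolding F_def F'_def by (rule shifted_gaussian_hermite_poly_decay)+
  moreover have "(F \<longlongrightarrow> 0) at_top" and "(F \<longlongrightarrow> 0) at_bot"
    unfolding F_def by (rule shifted_gaussian_hermite_poly_decay)+
  ultimately have "integral\<^sup>L lborel f = 0"
    unfolding f_def by (intro integral_eq_zero_if_antiderivative_vanishes[where F=F]) auto
  with \<open>integrable lborel F\<close> \<open>integrable lborel F'\<close> show ?thesis
    unfolding f_def F_def F'_def by simp
qed

lemma integral_shifted_gaussian_hermite_poly:
  "(LINT x|lborel. shifted_gaussian c x * complex_of_real (hermite_poly k x))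
     = complex_of_real (sqrt pi) * (2 * c) ^ k"
proof (induction k)
  case 0
  show ?case
    using integral_shifted_gaussian[of c] by simp
next
  case (Suc k)
  then show ?case
    by (simp add: integral_shifted_gaussian_hermite_poly_Suc)
qed

definition bargmann_kernel :: "complex \<Rightarrow> real \<Rightarrow> complex" where
  "bargmann_kernel z x =
     exp (- (z\<^sup>2 + (complex_of_real x)\<^sup>2) / 2 + complex_of_real (sqrt 2) * z * complex_of_real x)"

lemma bargmann_eq_integral:
  "bargmann \<phi> z = complex_of_real (pi powr (-1/4)) * (LINT x|lborel. bargmann_kernel z x * \<phi> x)"
  by (simp add: bargmann_def bargmann_kernel_def)

lemma bargmann_linear_combination:
  assumes "\<And>j. j \<in> J \<Longrightarrow> integrable lborel (\<lambda>x. bargmann_kernel z x * \<phi> j x)"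
  shows "bargmann (\<lambda>x. \<Sum>j\<in>J. c j * \<phi> j x) z = (\<Sum>j\<in>J. c j * bargmann (\<phi> j) z)"
proof -
  have "integrable lborel (\<lambda>x. c j * (bargmann_kernel z x * \<phi> j x))" if "j \<in> J" for j
    using assms[OF that] by simp
  then show ?thesis
    by (simp add: bargmann_eq_integral sum_distrib_left mult.left_commute)
qed

lemma sqrt2_mult_sqrt2: "complex_of_real (sqrt 2) * complex_of_real (sqrt 2) = 2"
  by (simp flip: of_real_mult)

lemma bargmann_kernel_mult_gaussian:
  "bargmann_kernel w x * complex_of_real (exp (- x\<^sup>2 / 2))
     = shifted_gaussian (w / complex_of_real (sqrt 2)) x"
proof -
  have "- (w\<^sup>2 + (complex_of_real x)\<^sup>2) / 2 + complex_of_real (sqrt 2) * w * complex_of_real x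
        + complex_of_real (- x\<^sup>2 / 2)
      = - (complex_of_real x - w / complex_of_real (sqrt 2))\<^sup>2"
    using sqrt2_mult_sqrt2 by (simp add: power2_eq_square field_simps)
  then show ?thesis
    unfolding bargmann_kernel_def shifted_gaussian_def by (simp flip: exp_add exp_of_real)
qed

lemma bargmann_kernel_mult_hermite_fun:
  "bargmann_kernel w x * complex_of_real (hermite_fun k x)
     = complex_of_real ((2 ^ k * fact k * sqrt pi) powr (-1/2))
       * (shifted_gaussian (w / complex_of_real (sqrt 2)) x * complex_of_real (hermite_poly k x))"
  by (simp add: hermite_fun_def flip: bargmann_kernel_mult_gaussian)

lemma integrable_bargmann_hermite_fun:
  "integrable lborel (\<lambda>x. bargmann_kernel w x * complex_of_real (hermite_fun k x))"
  unfolding bargmann_kernel_mult_hermite_fun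
  by (intro integrable_mult_right shifted_gaussian_hermite_poly_decay)

lemma hermite_fun_normalization:
  "pi powr (-1/4) * (2 ^ k * fact k * sqrt pi) powr (-1/2) * sqrt pi * sqrt 2 ^ k = 1 / sqrt (fact k)"
proof -
  define q where "q = pi powr (1/4)"
  have q: "q > 0" "sqrt pi = q * q" "pi powr (-1/4) = 1 / q"
    by (simp_all add: q_def powr_half_sqrt powr_minus_divide flip: powr_add)
  have "sqrt (sqrt pi) = q"
    by (simp add: q_def powr_powr flip: powr_half_sqrt)
  then have "(2 ^ k * fact k * sqrt pi) powr (-1/2) = 1 / (sqrt 2 ^ k * sqrt (fact k) * q)"
    by (simp add: powr_minus_divide powr_half_sqrt real_sqrt_mult real_sqrt_power)
  then show ?thesis
    unfolding q(3) using q(1,2) by (simp add: field_simps)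
qed

lemma bargmann_hermite_fun: "bargmann (\<lambda>x. complex_of_real (hermite_fun k x)) w = ek k w"
proof -
  have "2 * (w / complex_of_real (sqrt 2)) = complex_of_real (sqrt 2) * w"
    using sqrt2_mult_sqrt2 by (simp add: field_simps)
  then have "bargmann (\<lambda>x. complex_of_real (hermite_fun k x)) w
      = complex_of_real (pi powr (-1/4) * (2 ^ k * fact k * sqrt pi) powr (-1/2) * sqrt pi * sqrt 2 ^ k) * w ^ k"
    by (simp add: bargmann_eq_integral bargmann_kernel_mult_hermite_fun
        integral_shifted_gaussian_hermite_poly power_mult_distrib)
  also have "\<dots> = ek k w"
    unfolding hermite_fun_normalization ek_def by (simp add: divide_inverse)
  finally show ?thesis .
qed

lemma bargmann_kernel_modulation:
  assumes "b = - (\<i> / complex_of_real (sqrt 2)) * complex_of_real \<xi>"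
  shows "bargmann_kernel z x * exp (\<i> * complex_of_real (\<xi> * x))
    = fock_kernel b z * bargmann_kernel (z - b) x"
proof -
  have cnj_b: "cnj b = \<i> * complex_of_real \<xi> / complex_of_real (sqrt 2)"
    using assms by simp
  have norm_b: "complex_of_real ((cmod b)\<^sup>2) = complex_of_real \<xi> * complex_of_real \<xi> / 2"
  proof -
    have "(cmod b)\<^sup>2 = \<xi> * \<xi> / 2"
      using assms by (simp add: norm_mult norm_divide power_divide power2_eq_square)
    then show ?thesis by (simp only: of_real_mult of_real_divide of_real_numeral)
  qed
  have "- (z\<^sup>2 + (complex_of_real x)\<^sup>2) / 2 + complex_of_real (sqrt 2) * z * complex_of_real x
       + \<i> * complex_of_real (\<xi> * x)
     = (z * cnj b - complex_of_real ((cmod b)\<^sup>2) / 2) +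
       (- ((z - b)\<^sup>2 + (complex_of_real x)\<^sup>2) / 2 + complex_of_real (sqrt 2) * (z - b) * complex_of_real x)"
    unfolding cnj_b norm_b unfolding assms
    using sqrt2_mult_sqrt2 by (simp add: field_simps power2_eq_square)
  then show ?thesis
    unfolding fock_kernel_def bargmann_kernel_def by (simp flip: exp_add)
qed

lemma bargmann_kernel_modulation_mult:
  assumes "b = - (\<i> / complex_of_real (sqrt 2)) * complex_of_real \<xi>"
  shows "bargmann_kernel z x * (exp (\<i> * complex_of_real (\<xi> * x)) * y)
    = fock_kernel b z * (bargmann_kernel (z - b) x * y)"
  unfolding mult.assoc[symmetric] bargmann_kernel_modulation[OF assms] ..

lemma bargmann_modulation:
  assumes "b = - (\<i> / complex_of_real (sqrt 2)) * complex_of_real \<xi>"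
  shows "bargmann (\<lambda>x. exp (\<i> * complex_of_real (\<xi> * x)) * \<phi> x) z = fock_kernel b z * bargmann \<phi> (z - b)"
  unfolding bargmann_eq_integral bargmann_kernel_modulation_mult[OF assms] by (simp add: mult.left_commute)

lemma integrable_bargmann_modulation:
  assumes "b = - (\<i> / complex_of_real (sqrt 2)) * complex_of_real \<xi>"
    and "integrable lborel (\<lambda>x. bargmann_kernel (z - b) x * \<phi> x)"
  shows "integrable lborel (\<lambda>x. bargmann_kernel z x * (exp (\<i> * complex_of_real (\<xi> * x)) * \<phi> x))"
  unfolding bargmann_kernel_modulation_mult[OF assms(1)] using assms(2) by simp

theorem corollary3p20:
  fixes a :: real and k n :: nat and z :: complex
  assumes "a > 1" and "n \<ge> 1"
  shows "bargmann (Hkn k n a) z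
           = (\<Sum>j=0..n. complex_of_real (Ccoef j n a) * fock_kernel (bcoef j n) z * ek k (z - bcoef j n))
       \<and> (\<Sum>j=0..n. complex_of_real (Ccoef j n a) * fock_kernel (bcoef j n) z * ek k (z - bcoef j n))
           = (\<Sum>j=0..n. complex_of_real (Ccoef j n a) * weyl (bcoef j n) (ek k) z)"
proof
  define \<xi> where "\<xi> j = 1 - 2 * real j / real n" for j
  define \<phi> where "\<phi> j = (\<lambda>x. exp (\<i> * complex_of_real (\<xi> j * x)) * complex_of_real (hermite_fun k x))" for j
  have b: "bcoef j n = - (\<i> / complex_of_real (sqrt 2)) * complex_of_real (\<xi> j)" for j
    by (simp add: bcoef_def \<xi>_def)
  have "Hkn k n a = (\<lambda>x. \<Sum>j=0..n. complex_of_real (Ccoef j n a) * \<phi> j x)"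
    by (simp add: Hkn_def \<phi>_def \<xi>_def sum_distrib_left mult_ac fun_eq_iff)
  then have "bargmann (Hkn k n a) z = (\<Sum>j=0..n. complex_of_real (Ccoef j n a) * bargmann (\<phi> j) z)"
    by (simp only: bargmann_linear_combination \<phi>_def integrable_bargmann_modulation[OF b]
        integrable_bargmann_hermite_fun)
  also have "\<dots> = (\<Sum>j=0..n. complex_of_real (Ccoef j n a) * fock_kernel (bcoef j n) z * ek k (z - bcoef j n))"
    unfolding \<phi>_def bargmann_modulation[OF b] bargmann_hermite_fun by (simp add: mult.assoc)
  finally show "bargmann (Hkn k n a) z
      = (\<Sum>j=0..n. complex_of_real (Ccoef j n a) * fock_kernel (bcoef j n) z * ek k (z - bcoef j n))" .
  show "(\<Sum>j=0..n. complex_of_real (Ccoef j n a) * fock_kernel (bcoef j n) z * ek k (z - bcoef j n))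
      = (\<Sum>j=0..n. complex_of_real (Ccoef j n a) * weyl (bcoef j n) (ek k) z)"
    by (simp add: weyl_def mult_ac)
qed

end
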